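(* Let $H$ be local $\delta$-admissible on a set $T\subset(-\infty,t_G)$, where $t_G\in\{0,\infty\}$. Then for any $\varepsilon>0$ there exist $\eta>0$ and $t_0<t_G$ such that for all $t\in T$ with $t>t_0$ and all real $\theta$ with $|\theta|\le\frac{\eta}{2}\delta(t)$, \[ (1-\varepsilon)B(t)|\theta|\le|A(t+i\theta)-A(t)|\le(1+\varepsilon)B(t)|\theta|, \] and \[ \frac{1-\varepsilon}{2}\theta^2B(t)\le\int_0^\theta\mathrm{Im}\left[A(t+i\varphi)\right]d\varphi\le\frac{1+\varepsilon}{2}\theta^2B(t). \]
   Context: Let $G(z)=\sum_{n\ge0}a_n^2z^n$ with $a_n\ge0$, infinitely many non-zero, and radius of convergence $R_G\in\{1,\infty\}$; $t_G=\log R_G$. Put $H(z)=G(e^z)$, $A(z)=H'(z)/H(z)$, $B(z)=A'(z)$. $H$ is local $\delta$-admissible on $T\subset(-\infty,t_G)$ if there is a function $\delta:[-\infty,t_G)\to(0,\pi)$ (with $t+\delta(t)<t_G$) such that for every $\varepsilon>0$ there exist $\eta>0$ and $t_0(\varepsilon)$ such that for all $t\in T\cap(t_0(\varepsilon),t_G)$ and all complex $\tau$ with $|\tau|\le\eta\delta(t)$, \[ \log\frac{H(t+\tau)}{H(t)}=\tau A(t)+\tfrac12\tau^2B(t)+h_t(\tau),\qquad |h_t(\tau)|\le\varepsilon|\tau|^2B(t), \] where the logarithm is the branch analytic in $\tau$ and vanishing at $\tau=0$. *)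

theory Defs
  imports "HOL-Analysis.Analysis"
begin

definition Gf :: "(nat \<Rightarrow> real) \<Rightarrow> complex \<Rightarrow> complex" where
  "Gf a z = (\<Sum>n. complex_of_real ((a n)\<^sup>2) * z ^ n)"

definition Hf :: "(nat \<Rightarrow> real) \<Rightarrow> complex \<Rightarrow> complex" where
  "Hf a z = Gf a (exp z)"

definition Af :: "(nat \<Rightarrow> real) \<Rightarrow> complex \<Rightarrow> complex" where
  "Af a z = deriv (Hf a) z / Hf a z"

definition Bf :: "(nat \<Rightarrow> real) \<Rightarrow> complex \<Rightarrow> complex" where
  "Bf a z = deriv (Af a) z"

definition RG :: "(nat \<Rightarrow> real) \<Rightarrow> ereal" where
  "RG a = conv_radius (\<lambda>n. (a n)\<^sup>2)"

definition tG :: "(nat \<Rightarrow> real) \<Rightarrow> ereal" where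
  "tG a = (if RG a = \<infinity> then \<infinity> else ereal (ln (real_of_ereal (RG a))))"

definition G_standing :: "(nat \<Rightarrow> real) \<Rightarrow> bool" where
  "G_standing a \<longleftrightarrow> (\<forall>n. 0 \<le> a n) \<and> infinite {n. a n \<noteq> 0} \<and> RG a \<in> {1, \<infinity>}"

text \<open>The logarithm log(H(t+tau)/H(t)) is
  represented by a function L holomorphic in tau on the disc, vanishing at 0,
  with exp (L tau) = H(t+tau)/H(t) (the branch analytic in tau vanishing at 0).\<close>

definition local_delta_admissible ::
  "(nat \<Rightarrow> real) \<Rightarrow> (real \<Rightarrow> real) \<Rightarrow> real set \<Rightarrow> bool" where
  "local_delta_admissible a \<delta> T \<longleftrightarrow>
     T \<subseteq> {t. ereal t < tG a} \<and>
     (\<forall>t. ereal t < tG a \<longrightarrow> 0 < \<delta> t \<and> \<delta> t < pi \<and> ereal (t + \<delta> t) < tG a) \<and>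
     (\<forall>\<epsilon>>0. \<exists>\<eta>>0. \<exists>t0. ereal t0 < tG a \<and>
        (\<forall>t\<in>T. t0 < t \<longrightarrow>
          (\<exists>L. L holomorphic_on cball 0 (\<eta> * \<delta> t) \<and> L 0 = 0 \<and>
             (\<forall>\<tau>\<in>cball 0 (\<eta> * \<delta> t).
                exp (L \<tau>) = Hf a (of_real t + \<tau>) / Hf a (of_real t) \<and>
                cmod (L \<tau> - (\<tau> * Af a (of_real t) + \<tau>\<^sup>2 / 2 * Bf a (of_real t)))
                  \<le> \<epsilon> * (cmod \<tau>)\<^sup>2 * Re (Bf a (of_real t))))))"

end

theory Submission
  imports Defs "HOL-Complex_Analysis.Cauchy_Integral_Formula"
begin

text \<open>Let L be the branch of log (H(t + tau) / H(t)) from the admissibility condition, so that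
  A(t + tau) = L'(tau). Admissibility bounds the remainder h(tau) = L(tau) - tau A(t) - tau^2 B(t) / 2
  by eps |tau|^2 B(t) on the disc |tau| <= R = eta delta(t), and Cauchy's estimate on the disc of
  radius |tau| about tau turns this into |L'(tau) - A(t) - tau B(t)| <= 4 eps |tau| B(t) for
  |tau| <= R/2; this loss of a factor 4 is why eps/4 is fed into the admissibility condition.
  As H is real on the real axis, A(t) and B(t) are real, and B(t) >= 0 since otherwise the remainder
  bound fails; so tau = i theta gives the bounds on |A(t + i theta) - A(t)|. Finally
  Im A(t + i phi) is the derivative of -Re L(i phi), so the integral equals
  -Re L(i theta) = theta^2 B(t) / 2 - Re h(i theta).\<close>

lemma deriv_in_Reals:
  fixes f :: "complex \<Rightarrow> complex"
  assumes holf: "f holomorphic_on S" and "open S"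
    and real: "\<And>y. y \<in> S \<Longrightarrow> y \<in> \<real> \<Longrightarrow> f y \<in> \<real>"
    and x: "x \<in> S" "x \<in> \<real>"
  shows "deriv f x \<in> \<real>"
proof -
  have "(f has_field_derivative deriv f x) (at x within \<real>)"
    using holf \<open>open S\<close> x(1)
    by (meson DERIV_deriv_iff_field_differentiable has_field_derivative_at_within
        holomorphic_on_imp_differentiable_at)
  hence lim: "((\<lambda>y. (f y - f x) / (y - x)) \<longlongrightarrow> deriv f x) (at x within \<real>)"
    by (simp add: has_field_derivative_iff)
  have "eventually (\<lambda>y. y \<in> S) (at x within \<real>)"
    using \<open>open S\<close> x(1) eventually_at_topological by blast
  hence "eventually (\<lambda>y. (f y - f x) / (y - x) \<in> \<real>) (at x within \<real>)"
    unfolding eventually_at_filter using real x by (auto elim!: eventually_mono)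
  moreover have "x islimpt \<real>"
    unfolding islimpt_approachable
  proof (intro allI impI)
    fix e :: real assume "e > 0"
    show "\<exists>x'\<in>\<real>. x' \<noteq> x \<and> dist x' x < e"
      using x(2) \<open>e > 0\<close> by (intro bexI[of _ "x + of_real (e/2)"]) (auto simp: dist_norm)
  qed
  hence "at x within \<real> \<noteq> bot"
    using trivial_limit_within by blast
  ultimately show ?thesis
    using Lim_in_closed_set[OF closed_complex_Reals _ _ lim] by blast
qed

lemma exp_representation_logderiv:
  fixes f L :: "complex \<Rightarrow> complex"
  assumes holL: "L holomorphic_on ball 0 R"
    and f: "\<And>\<tau>. \<tau> \<in> ball 0 R \<Longrightarrow> f (z + \<tau>) = c * exp (L \<tau>)" and "c \<noteq> 0"
  shows "f holomorphic_on ball z R"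
    and "\<And>w. w \<in> ball z R \<Longrightarrow> f w \<noteq> 0"
    and "\<And>\<tau>. \<tau> \<in> ball 0 R \<Longrightarrow> deriv f (z + \<tau>) / f (z + \<tau>) = deriv L \<tau>"
proof -
  have shift: "w - z \<in> ball 0 R \<longleftrightarrow> w \<in> ball z R" for w
    by (simp add: dist_norm norm_minus_commute)
  have f_eq: "f w = c * exp (L (w - z))" if "w \<in> ball z R" for w
    using f[of "w - z"] shift that by simp
  have "(\<lambda>w. c * exp (L (w - z))) holomorphic_on ball z R"
    using shift by (intro holomorphic_intros holomorphic_on_compose_gen[OF _ holL, unfolded o_def])
      auto
  then show "f holomorphic_on ball z R"
    by (rule holomorphic_transform) (simp add: f_eq)
  show "f w \<noteq> 0" if "w \<in> ball z R" for w
    using f_eq[OF that] \<open>c \<noteq> 0\<close> by simp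
  fix \<tau> :: complex assume \<tau>: "\<tau> \<in> ball 0 R"
  have "DERIV L \<tau> :> deriv L \<tau>"
    using holL \<tau> by (meson DERIV_deriv_iff_field_differentiable open_ball
        holomorphic_on_imp_differentiable_at)
  hence "DERIV (\<lambda>w. L (w - z)) (z + \<tau>) :> deriv L \<tau> * 1"
    by (intro DERIV_chain2[of L]) (auto intro!: derivative_eq_intros)
  hence "DERIV (\<lambda>w. c * exp (L (w - z))) (z + \<tau>) :> c * (exp (L \<tau>) * deriv L \<tau>)"
    by (auto intro!: derivative_eq_intros)
  hence derivf: "DERIV f (z + \<tau>) :> c * (exp (L \<tau>) * deriv L \<tau>)"
    by (rule has_field_derivative_transform_within_open[of _ _ _ "ball z R"])
      (use \<tau> shift f_eq in \<open>auto simp: dist_norm\<close>)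
  show "deriv f (z + \<tau>) / f (z + \<tau>) = deriv L \<tau>"
    using DERIV_imp_deriv[OF derivf] f[OF \<tau>] \<open>c \<noteq> 0\<close> by simp
qed

lemma deriv_bound_of_quadratic_bound:
  fixes h :: "complex \<Rightarrow> complex"
  assumes holh: "h holomorphic_on cball 0 R"
    and bound: "\<And>w. w \<in> cball 0 R \<Longrightarrow> cmod (h w) \<le> C * (cmod w)\<^sup>2" and "0 \<le> C"
    and "\<tau> \<noteq> 0" and \<tau>: "2 * cmod \<tau> \<le> R"
  shows "cmod (deriv h \<tau>) \<le> 4 * C * cmod \<tau>"
proof -
  have sub: "cball \<tau> (cmod \<tau>) \<subseteq> cball 0 R"
  proof
    fix w assume "w \<in> cball \<tau> (cmod \<tau>)"
    hence "cmod (w - \<tau>) \<le> cmod \<tau>" by (simp add: dist_norm norm_minus_commute)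
    moreover have "cmod w \<le> cmod \<tau> + cmod (w - \<tau>)" by (metis norm_triangle_sub)
    ultimately show "w \<in> cball 0 R" using \<tau> by simp
  qed
  have "cmod ((deriv ^^ 1) h \<tau>) \<le> fact 1 * (C * (2 * cmod \<tau>)\<^sup>2) / cmod \<tau> ^ 1"
  proof (rule Cauchy_inequality)
    show "h holomorphic_on ball \<tau> (cmod \<tau>)"
      using holomorphic_on_subset[OF holh] sub ball_subset_cball by blast
    show "continuous_on (cball \<tau> (cmod \<tau>)) h"
      using continuous_on_subset[OF holomorphic_on_imp_continuous_on[OF holh] sub] .
    show "0 < cmod \<tau>" using \<open>\<tau> \<noteq> 0\<close> by simp
    fix w assume w: "cmod (\<tau> - w) = cmod \<tau>"
    have "cmod w \<le> cmod \<tau> + cmod (\<tau> - w)"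
      by (metis norm_triangle_sub norm_minus_commute)
    hence "(cmod w)\<^sup>2 \<le> (2 * cmod \<tau>)\<^sup>2"
      using w by (intro power_mono) auto
    moreover have "w \<in> cball 0 R"
      using sub w by (simp add: dist_norm subset_iff)
    ultimately show "cmod (h w) \<le> C * (2 * cmod \<tau>)\<^sup>2"
      using bound \<open>0 \<le> C\<close> by (meson mult_left_mono order_trans)
  qed
  then show ?thesis
    using \<open>\<tau> \<noteq> 0\<close> by (simp add: power2_eq_square)
qed

lemma integral_Im_deriv_on_imaginary_axis:
  fixes L :: "complex \<Rightarrow> complex"
  assumes holL: "L holomorphic_on ball 0 R" and "\<bar>\<theta>\<bar> < R"
  shows "(LBINT \<phi>=0..\<theta>. Im (deriv L (\<i> * of_real \<phi>))) = Re (L 0) - Re (L (\<i> * of_real \<theta>))"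
proof -
  let ?I = "{min 0 \<theta>..max 0 \<theta>}"
  have inb: "\<i> * of_real \<phi> \<in> ball 0 R" if "\<phi> \<in> ?I" for \<phi>
    using that \<open>\<bar>\<theta>\<bar> < R\<close> by (auto simp: norm_mult)
  have "continuous_on (ball 0 R) (deriv L)"
    using holL by (intro holomorphic_on_imp_continuous_on holomorphic_deriv) auto
  hence "continuous_on ?I (\<lambda>\<phi>. deriv L (\<i> * of_real \<phi>))"
    by (rule continuous_on_compose2) (use inb in \<open>auto intro!: continuous_intros\<close>)
  hence cont: "continuous_on ?I (\<lambda>\<phi>. Im (deriv L (\<i> * of_real \<phi>)))"
    by (intro continuous_intros)
  have deriv: "((\<lambda>\<phi>. - Re (L (\<i> * of_real \<phi>))) has_vector_derivative Im (deriv L (\<i> * of_real \<phi>)))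
      (at \<phi> within ?I)" if \<phi>: "\<phi> \<in> ?I" for \<phi>
  proof -
    have "DERIV L (\<i> * of_real \<phi>) :> deriv L (\<i> * of_real \<phi>)"
      using holL inb[OF \<phi>] by (meson DERIV_deriv_iff_field_differentiable open_ball
          holomorphic_on_imp_differentiable_at)
    hence "DERIV (\<lambda>z. L (\<i> * z)) (of_real \<phi>) :> deriv L (\<i> * of_real \<phi>) * \<i>"
      by (intro DERIV_chain2[of L]) (auto intro!: derivative_eq_intros)
    hence "((\<lambda>x. L (\<i> * of_real x)) has_vector_derivative deriv L (\<i> * of_real \<phi>) * \<i>) (at \<phi>)"
      by (rule has_vector_derivative_real_field)
    hence "((\<lambda>x. Re (L (\<i> * of_real x))) has_field_derivative - Im (deriv L (\<i> * of_real \<phi>)))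
        (at \<phi>)"
      using has_vector_derivative_complex_iff by fastforce
    hence "((\<lambda>x. - Re (L (\<i> * of_real x))) has_field_derivative Im (deriv L (\<i> * of_real \<phi>)))
        (at \<phi>)"
      using DERIV_minus by fastforce
    then show ?thesis
      by (simp add: has_real_derivative_iff_has_vector_derivative has_vector_derivative_at_within)
  qed
  show ?thesis
    using interval_integral_FTC_finite[OF cont deriv] by (simp add: zero_ereal_def)
qed

lemma Hf_of_real_in_Reals:
  assumes "G_standing a" and "ereal s < tG a"
  shows "Hf a (of_real s) \<in> \<real>"
proof -
  have "ereal (norm (exp s)) < RG a"
    using assms unfolding G_standing_def tG_def
    by (auto simp: one_ereal_def zero_ereal_def)
  hence "summable (\<lambda>n. (a n)\<^sup>2 * exp s ^ n)"
    using summable_in_conv_radius[of "exp s" "\<lambda>n. (a n)\<^sup>2"] unfolding RG_def by simp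
  hence "Hf a (of_real s) = of_real (\<Sum>n. (a n)\<^sup>2 * exp s ^ n)"
    unfolding Hf_def Gf_def using suminf_of_real[where 'a=complex] by (simp add: exp_of_real)
  then show ?thesis
    by simp
qed

definition Hf_log_expansion ::
  "(nat \<Rightarrow> real) \<Rightarrow> real \<Rightarrow> real \<Rightarrow> real \<Rightarrow> (complex \<Rightarrow> complex) \<Rightarrow> bool" where
  "Hf_log_expansion a t R e L \<longleftrightarrow>
     L holomorphic_on cball 0 R \<and> L 0 = 0 \<and>
     (\<forall>\<tau>\<in>cball 0 R.
        exp (L \<tau>) = Hf a (of_real t + \<tau>) / Hf a (of_real t) \<and>
        cmod (L \<tau> - (\<tau> * Af a (of_real t) + \<tau>\<^sup>2 / 2 * Bf a (of_real t)))
          \<le> e * (cmod \<tau>)\<^sup>2 * Re (Bf a (of_real t)))"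

lemma local_delta_admissibleD:
  assumes "local_delta_admissible a \<delta> T" and "e > 0"
  shows "\<exists>\<eta>>0. \<exists>t0. ereal t0 < tG a \<and>
    (\<forall>t\<in>T. t0 < t \<longrightarrow>
       ereal t < tG a \<and> 0 < \<eta> * \<delta> t \<and> (\<exists>L. Hf_log_expansion a t (\<eta> * \<delta> t) e L))"
proof -
  have "ereal t < tG a \<and> 0 < \<delta> t" if "t \<in> T" for t
    using assms(1) that unfolding local_delta_admissible_def by blast
  with assms show ?thesis
    unfolding local_delta_admissible_def Hf_log_expansion_def by (metis mult_pos_pos)
qed

lemma Hf_log_expansion_Af:
  assumes expansion: "Hf_log_expansion a t R e L" and "R > 0"
  shows "Hf a holomorphic_on ball (of_real t) R"
    and "\<And>z. z \<in> ball (of_real t) R \<Longrightarrow> Hf a z \<noteq> 0"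
    and "\<And>\<tau>. \<tau> \<in> ball 0 R \<Longrightarrow> Af a (of_real t + \<tau>) = deriv L \<tau>"
proof -
  have L: "L holomorphic_on ball 0 R"
    using expansion holomorphic_on_subset ball_subset_cball unfolding Hf_log_expansion_def by blast
  have H0: "Hf a (of_real t) \<noteq> 0"
    using expansion \<open>R > 0\<close> unfolding Hf_log_expansion_def by (auto dest: bspec[of _ _ 0])
  have H_eq: "Hf a (of_real t + \<tau>) = Hf a (of_real t) * exp (L \<tau>)" if "\<tau> \<in> ball 0 R" for \<tau>
    using expansion that H0 unfolding Hf_log_expansion_def by (auto simp: field_simps)
  show "Hf a holomorphic_on ball (of_real t) R"
    using H_eq by (rule exp_representation_logderiv(1)[OF L _ H0])
  show "Hf a z \<noteq> 0" if "z \<in> ball (of_real t) R" for z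
    using H_eq that by (rule exp_representation_logderiv(2)[OF L _ H0])
  show "Af a (of_real t + \<tau>) = deriv L \<tau>" if "\<tau> \<in> ball 0 R" for \<tau>
    unfolding Af_def using H_eq that by (rule exp_representation_logderiv(3)[OF L _ H0])
qed

lemma Hf_log_expansion_Re_Bf_nonneg:
  assumes "Hf_log_expansion a t R e L" and "R > 0" and "e > 0"
  shows "0 \<le> Re (Bf a (of_real t))"
proof -
  have "0 \<le> e * (cmod (of_real R :: complex))\<^sup>2 * Re (Bf a (of_real t))"
    using assms unfolding Hf_log_expansion_def by (auto dest!: bspec[of _ _ "of_real R"]
        intro: order_trans[OF norm_ge_zero])
  moreover have "0 < e * R\<^sup>2"
    using assms by simp
  ultimately show ?thesis
    by (simp add: zero_le_mult_iff)
qed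

lemma Af_Bf_in_Reals:
  assumes "G_standing a" and "ereal t < tG a" and "R > 0"
    and hol: "Hf a holomorphic_on ball (of_real t) R"
    and nonzero: "\<And>z. z \<in> ball (of_real t) R \<Longrightarrow> Hf a z \<noteq> 0"
  shows "Af a (of_real t) \<in> \<real>" and "Bf a (of_real t) \<in> \<real>"
proof -
  have "eventually (\<lambda>s. ereal s < tG a) (nhds t)"
    using assms(2) by (intro order_tendstoD(2)[of ereal]) (auto intro: filterlim_ident)
  then obtain d where "d > 0" and below_tG: "\<And>s. dist s t < d \<Longrightarrow> ereal s < tG a"
    unfolding eventually_nhds_metric by blast
  define S where "S = ball (of_real t :: complex) (min d R)"
  have S: "open S" "of_real t \<in> S" "S \<subseteq> ball (of_real t) R"
    using \<open>d > 0\<close> \<open>R > 0\<close> unfolding S_def by auto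
  have holS: "Hf a holomorphic_on S"
    using hol S(3) by (rule holomorphic_on_subset)
  have H_real: "Hf a y \<in> \<real>" if "y \<in> S" "y \<in> \<real>" for y
  proof -
    obtain s where "y = of_real s" using \<open>y \<in> \<real>\<close> by (auto elim: Reals_cases)
    moreover have "dist s t < d"
      using \<open>y \<in> S\<close> unfolding S_def \<open>y = of_real s\<close> by (simp add: dist_commute)
    ultimately show ?thesis
      using Hf_of_real_in_Reals[OF \<open>G_standing a\<close> below_tG] by simp
  qed
  have A_real: "Af a y \<in> \<real>" if "y \<in> S" "y \<in> \<real>" for y
    unfolding Af_def using deriv_in_Reals[OF holS S(1) H_real that] H_real[OF that]
    by (rule Reals_divide)
  then show "Af a (of_real t) \<in> \<real>"
    using S(2) by simp
  have "Af a = (\<lambda>z. deriv (Hf a) z / Hf a z)"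
    by (simp add: Af_def fun_eq_iff)
  hence "Af a holomorphic_on S"
    using holS S(1,3) nonzero by (auto intro!: holomorphic_intros holomorphic_deriv)
  then show "Bf a (of_real t) \<in> \<real>"
    unfolding Bf_def using deriv_in_Reals[OF _ S(1) A_real S(2)] by simp
qed

lemma Hf_log_expansion_deriv_bound:
  assumes expansion: "Hf_log_expansion a t R e L" and "0 \<le> e" and "0 \<le> Re (Bf a (of_real t))"
    and "\<tau> \<noteq> 0" and \<tau>: "2 * cmod \<tau> \<le> R"
  shows "cmod (deriv L \<tau> - Af a (of_real t) - \<tau> * Bf a (of_real t))
    \<le> 4 * e * Re (Bf a (of_real t)) * cmod \<tau>"
proof -
  define A0 where "A0 = Af a (of_real t)"
  define b where "b = Bf a (of_real t)"
  define h where "h w = L w - (w * A0 + w\<^sup>2 / 2 * b)" for w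
  have holL: "L holomorphic_on cball 0 R"
    using expansion unfolding Hf_log_expansion_def by blast
  hence "h holomorphic_on cball 0 R"
    unfolding h_def by (intro holomorphic_intros) auto
  moreover have "cmod (h w) \<le> (e * Re b) * (cmod w)\<^sup>2" if "w \<in> cball 0 R" for w
    using expansion that unfolding Hf_log_expansion_def h_def A0_def b_def by (simp add: algebra_simps)
  moreover have "0 \<le> e * Re b"
    using assms(2,3) unfolding b_def by simp
  ultimately have "cmod (deriv h \<tau>) \<le> 4 * (e * Re b) * cmod \<tau>"
    using \<open>\<tau> \<noteq> 0\<close> \<tau> by (rule deriv_bound_of_quadratic_bound)
  moreover have "deriv h \<tau> = deriv L \<tau> - A0 - \<tau> * b"
  proof (rule DERIV_imp_deriv)
    have "0 < cmod \<tau>"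
      using \<open>\<tau> \<noteq> 0\<close> by simp
    hence "cmod \<tau> < R"
      using \<tau> by linarith
    hence "\<tau> \<in> ball 0 R"
      by simp
    hence "DERIV L \<tau> :> deriv L \<tau>"
      using holL by (meson DERIV_deriv_iff_field_differentiable ball_subset_cball
          holomorphic_on_imp_differentiable_at holomorphic_on_subset open_ball)
    then show "DERIV h \<tau> :> deriv L \<tau> - A0 - \<tau> * b"
      unfolding h_def by (auto intro!: derivative_eq_intros simp: field_simps power2_eq_square)
  qed
  ultimately show ?thesis
    unfolding A0_def b_def by (simp add: mult_ac)
qed

lemma Af_imaginary_increment_bound:
  assumes expansion: "Hf_log_expansion a t R e L" and "R > 0" and "e > 0"
    and b_real: "Bf a (of_real t) \<in> \<real>" and \<theta>: "\<bar>\<theta>\<bar> \<le> R / 2"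
  shows "\<bar>cmod (Af a (Complex t \<theta>) - Af a (of_real t)) - Re (Bf a (of_real t)) * \<bar>\<theta>\<bar>\<bar>
    \<le> 4 * e * Re (Bf a (of_real t)) * \<bar>\<theta>\<bar>"
proof (cases "\<theta> = 0")
  case True
  then show ?thesis by (simp add: complex_of_real_def)
next
  case False
  define \<tau> where "\<tau> = \<i> * of_real \<theta>"
  define b where "b = Bf a (of_real t)"
  have b_nonneg: "0 \<le> Re b"
    unfolding b_def using Hf_log_expansion_Re_Bf_nonneg[OF expansion \<open>R > 0\<close> \<open>e > 0\<close>] .
  have norm_\<tau>: "cmod \<tau> = \<bar>\<theta>\<bar>"
    unfolding \<tau>_def by (simp add: norm_mult)
  have "\<tau> \<noteq> 0"
    using False norm_\<tau> by auto
  have on_axis: "Af a (Complex t \<theta>) = deriv L \<tau>"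
    using Hf_log_expansion_Af(3)[OF expansion \<open>R > 0\<close>, of \<tau>] \<theta> \<open>R > 0\<close> norm_\<tau>
    by (simp add: \<tau>_def Complex_eq)
  have "cmod (\<tau> * b) = Re b * \<bar>\<theta>\<bar>"
    using b_real b_nonneg norm_\<tau> unfolding b_def by (auto simp: norm_mult elim!: Reals_cases)
  moreover have "cmod (deriv L \<tau> - Af a (of_real t) - \<tau> * b) \<le> 4 * e * Re b * \<bar>\<theta>\<bar>"
    using Hf_log_expansion_deriv_bound[OF expansion _ b_nonneg[unfolded b_def] \<open>\<tau> \<noteq> 0\<close>]
      \<open>e > 0\<close> \<theta> norm_\<tau> unfolding b_def by simp
  moreover have "\<bar>cmod (deriv L \<tau> - Af a (of_real t)) - cmod (\<tau> * b)\<bar>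
      \<le> cmod (deriv L \<tau> - Af a (of_real t) - \<tau> * b)"
    by (rule norm_triangle_ineq3)
  ultimately show ?thesis
    unfolding on_axis b_def by linarith
qed

lemma integral_Im_Af_bound:
  assumes expansion: "Hf_log_expansion a t R e L"
    and A_real: "Af a (of_real t) \<in> \<real>" and b_real: "Bf a (of_real t) \<in> \<real>"
    and \<theta>: "\<bar>\<theta>\<bar> < R"
  shows "\<bar>(LBINT \<phi>=0..\<theta>. Im (Af a (Complex t \<phi>))) - \<theta>\<^sup>2 / 2 * Re (Bf a (of_real t))\<bar>
    \<le> e * \<theta>\<^sup>2 * Re (Bf a (of_real t))"
proof -
  have "R > 0"
    using \<theta> by linarith
  have holL: "L holomorphic_on ball 0 R" and "L 0 = 0"
    using expansion holomorphic_on_subset ball_subset_cball unfolding Hf_log_expansion_def by blast+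
  have on_axis: "Af a (Complex t \<phi>) = deriv L (\<i> * of_real \<phi>)" if "\<bar>\<phi>\<bar> < R" for \<phi>
    using Hf_log_expansion_Af(3)[OF expansion \<open>R > 0\<close>, of "\<i> * of_real \<phi>"] that
    by (simp add: Complex_eq norm_mult)
  have "(LBINT \<phi>=0..\<theta>. Im (Af a (Complex t \<phi>))) = (LBINT \<phi>=0..\<theta>. Im (deriv L (\<i> * of_real \<phi>)))"
    by (intro interval_integral_cong arg_cong[where f=Im] on_axis)
      (use \<theta> in \<open>auto simp: einterval_def min_def max_def split: if_splits\<close>)
  also have "\<dots> = - Re (L (\<i> * of_real \<theta>))"
    using integral_Im_deriv_on_imaginary_axis[OF holL \<theta>] \<open>L 0 = 0\<close> by simp
  finally have integral: "(LBINT \<phi>=0..\<theta>. Im (Af a (Complex t \<phi>))) = - Re (L (\<i> * of_real \<theta>))" .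
  define \<tau> where "\<tau> = \<i> * of_real \<theta>"
  define rest where "rest = L \<tau> - (\<tau> * Af a (of_real t) + \<tau>\<^sup>2 / 2 * Bf a (of_real t))"
  have norm_\<tau>: "cmod \<tau> = \<bar>\<theta>\<bar>"
    unfolding \<tau>_def by (simp add: norm_mult)
  hence "\<tau> \<in> cball 0 R"
    using \<theta> by simp
  hence "cmod rest \<le> e * (cmod \<tau>)\<^sup>2 * Re (Bf a (of_real t))"
    using expansion unfolding Hf_log_expansion_def rest_def by blast
  hence "cmod rest \<le> e * \<theta>\<^sup>2 * Re (Bf a (of_real t))"
    by (simp add: norm_\<tau>)
  moreover have "Re (L \<tau>) = - \<theta>\<^sup>2 / 2 * Re (Bf a (of_real t)) + Re rest"
    using A_real b_real unfolding rest_def \<tau>_def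
    by (auto simp: power2_eq_square elim!: Reals_cases)
  ultimately show ?thesis
    using integral abs_Re_le_cmod[of rest] unfolding \<tau>_def by linarith
qed

lemma Hf_log_expansion_imaginary_bounds:
  assumes "G_standing a" and "ereal t < tG a" and "R > 0" and "\<epsilon> > 0"
    and L: "Hf_log_expansion a t R (\<epsilon> / 4) L" and \<theta>: "\<bar>\<theta>\<bar> \<le> R / 2"
  defines "\<beta> \<equiv> Re (Bf a (of_real t))"
  shows "(1 - \<epsilon>) * \<beta> * \<bar>\<theta>\<bar> \<le> cmod (Af a (Complex t \<theta>) - Af a (of_real t))"
    and "cmod (Af a (Complex t \<theta>) - Af a (of_real t)) \<le> (1 + \<epsilon>) * \<beta> * \<bar>\<theta>\<bar>"
    and "(1 - \<epsilon>) / 2 * \<theta>\<^sup>2 * \<beta> \<le> (LBINT \<phi>=0..\<theta>. Im (Af a (Complex t \<phi>)))"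
    and "(LBINT \<phi>=0..\<theta>. Im (Af a (Complex t \<phi>))) \<le> (1 + \<epsilon>) / 2 * \<theta>\<^sup>2 * \<beta>"
proof -
  have "\<epsilon> / 4 > 0" "\<bar>\<theta>\<bar> < R"
    using \<open>\<epsilon> > 0\<close> \<theta> \<open>R > 0\<close> by auto
  note real = Af_Bf_in_Reals[OF \<open>G_standing a\<close> \<open>ereal t < tG a\<close> \<open>R > 0\<close>
      Hf_log_expansion_Af(1,2)[OF L \<open>R > 0\<close>]]
  have "\<bar>cmod (Af a (Complex t \<theta>) - Af a (of_real t)) - \<beta> * \<bar>\<theta>\<bar>\<bar> \<le> \<epsilon> * \<beta> * \<bar>\<theta>\<bar>"
    using Af_imaginary_increment_bound[OF L \<open>R > 0\<close> \<open>\<epsilon> / 4 > 0\<close> real(2) \<theta>]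
    unfolding \<beta>_def by simp
  moreover have "(1 - \<epsilon>) * \<beta> * \<bar>\<theta>\<bar> = \<beta> * \<bar>\<theta>\<bar> - \<epsilon> * \<beta> * \<bar>\<theta>\<bar>"
    "(1 + \<epsilon>) * \<beta> * \<bar>\<theta>\<bar> = \<beta> * \<bar>\<theta>\<bar> + \<epsilon> * \<beta> * \<bar>\<theta>\<bar>"
    by (simp_all add: algebra_simps)
  ultimately show "(1 - \<epsilon>) * \<beta> * \<bar>\<theta>\<bar> \<le> cmod (Af a (Complex t \<theta>) - Af a (of_real t))"
    and "cmod (Af a (Complex t \<theta>) - Af a (of_real t)) \<le> (1 + \<epsilon>) * \<beta> * \<bar>\<theta>\<bar>"
    by (simp_all only: abs_le_iff) linarith+
  have "\<bar>(LBINT \<phi>=0..\<theta>. Im (Af a (Complex t \<phi>))) - \<theta>\<^sup>2 / 2 * \<beta>\<bar> \<le> \<epsilon> / 4 * \<theta>\<^sup>2 * \<beta>"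
    using integral_Im_Af_bound[OF L real \<open>\<bar>\<theta>\<bar> < R\<close>] unfolding \<beta>_def .
  moreover have "\<epsilon> / 4 * \<theta>\<^sup>2 * \<beta> \<le> \<epsilon> / 2 * \<theta>\<^sup>2 * \<beta>"
    using Hf_log_expansion_Re_Bf_nonneg[OF L \<open>R > 0\<close> \<open>\<epsilon> / 4 > 0\<close>] \<open>\<epsilon> > 0\<close> unfolding \<beta>_def
    by (intro mult_right_mono) auto
  moreover have "(1 - \<epsilon>) / 2 * \<theta>\<^sup>2 * \<beta> = \<theta>\<^sup>2 / 2 * \<beta> - \<epsilon> / 2 * \<theta>\<^sup>2 * \<beta>"
    "(1 + \<epsilon>) / 2 * \<theta>\<^sup>2 * \<beta> = \<theta>\<^sup>2 / 2 * \<beta> + \<epsilon> / 2 * \<theta>\<^sup>2 * \<beta>"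
    by (simp_all add: algebra_simps add_divide_distrib diff_divide_distrib)
  ultimately show "(1 - \<epsilon>) / 2 * \<theta>\<^sup>2 * \<beta> \<le> (LBINT \<phi>=0..\<theta>. Im (Af a (Complex t \<phi>)))"
    and "(LBINT \<phi>=0..\<theta>. Im (Af a (Complex t \<phi>))) \<le> (1 + \<epsilon>) / 2 * \<theta>\<^sup>2 * \<beta>"
    by (simp_all only: abs_le_iff) linarith+
qed

theorem lemma2p3:
  fixes a :: "nat \<Rightarrow> real" and \<delta> :: "real \<Rightarrow> real" and T :: "real set" and \<epsilon> :: real
  assumes "G_standing a"
    and "local_delta_admissible a \<delta> T"
    and "\<epsilon> > 0"
  shows "\<exists>\<eta>>0. \<exists>t0. ereal t0 < tG a \<and>
    (\<forall>t\<in>T. t0 < t \<longrightarrow> (\<forall>\<theta>::real. \<bar>\<theta>\<bar> \<le> \<eta> / 2 * \<delta> t \<longrightarrow>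
       (1 - \<epsilon>) * Re (Bf a (of_real t)) * \<bar>\<theta>\<bar>
          \<le> cmod (Af a (Complex t \<theta>) - Af a (of_real t)) \<and>
       cmod (Af a (Complex t \<theta>) - Af a (of_real t))
          \<le> (1 + \<epsilon>) * Re (Bf a (of_real t)) * \<bar>\<theta>\<bar> \<and>
       (1 - \<epsilon>) / 2 * \<theta>\<^sup>2 * Re (Bf a (of_real t))
          \<le> (LBINT \<phi>=0..\<theta>. Im (Af a (Complex t \<phi>))) \<and>
       (LBINT \<phi>=0..\<theta>. Im (Af a (Complex t \<phi>)))
          \<le> (1 + \<epsilon>) / 2 * \<theta>\<^sup>2 * Re (Bf a (of_real t))))"
proof -
  obtain \<eta> t0 where "\<eta> > 0" "ereal t0 < tG a" and expansion: "\<forall>t\<in>T. t0 < t \<longrightarrow>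
      ereal t < tG a \<and> 0 < \<eta> * \<delta> t \<and> (\<exists>L. Hf_log_expansion a t (\<eta> * \<delta> t) (\<epsilon> / 4) L)"
    using local_delta_admissibleD[OF assms(2), of "\<epsilon> / 4"] \<open>\<epsilon> > 0\<close> by auto
  show ?thesis
  proof (rule exI[of _ \<eta>], intro conjI \<open>\<eta> > 0\<close>,
      rule exI[of _ t0], intro conjI \<open>ereal t0 < tG a\<close> ballI impI allI)
    fix t \<theta> assume "t \<in> T" "t0 < t" and \<theta>: "\<bar>\<theta>\<bar> \<le> \<eta> / 2 * \<delta> t"
    then obtain L where "ereal t < tG a" "0 < \<eta> * \<delta> t"
      and L: "Hf_log_expansion a t (\<eta> * \<delta> t) (\<epsilon> / 4) L"
      using expansion by blast
    note bounds = Hf_log_expansion_imaginary_bounds[OF \<open>G_standing a\<close> this(1,2) \<open>\<epsilon> > 0\<close> L]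
    show "(1 - \<epsilon>) * Re (Bf a (of_real t)) * \<bar>\<theta>\<bar> \<le> cmod (Af a (Complex t \<theta>) - Af a (of_real t))"
      "cmod (Af a (Complex t \<theta>) - Af a (of_real t)) \<le> (1 + \<epsilon>) * Re (Bf a (of_real t)) * \<bar>\<theta>\<bar>"
      "(1 - \<epsilon>) / 2 * \<theta>\<^sup>2 * Re (Bf a (of_real t)) \<le> (LBINT \<phi>=0..\<theta>. Im (Af a (Complex t \<phi>)))"
      "(LBINT \<phi>=0..\<theta>. Im (Af a (Complex t \<phi>))) \<le> (1 + \<epsilon>) / 2 * \<theta>\<^sup>2 * Re (Bf a (of_real t))"
      using bounds \<theta> by simp_all
  qed
qed

end
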